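(* Let $K\subseteq\mathbb{R}^d$ be nonempty, closed and convex with $B(0,1)\subseteq K\subseteq B(0,R)$ for some $R>1$, and let $\pi$ be the uniform distribution on $K$. Run the ASF for the uniform distribution on $K$ with step size $\eta=1/d^2$ from an initial distribution $\mu_0$ that is $M$-warm with respect to $\pi$, implementing step (2) by the projection-based rejection sampler. Let $y=y_k$ be the point produced by step (1) at any iteration $k$. Then the expected number of trials of the rejection sampler, $\mathbb{E}[n_{y}]$ with $n_y$ as below and expectation over the law of $y_k$, is at most $M(\sqrt{2\pi e}+1)$.
   Context: ASF with step size $\eta$: given $x_k$, (1) sample $y_k\sim\mathcal{N}(x_k,\eta I_d)$; (2) sample $x_{k+1}$ from the density proportional to $\exp(-\|x-y_k\|^2/(2\eta))\mathbf{1}_K(x)$. $\mu_0$ is $M$-warm w.r.t. $\pi$ if $\mu_0\ll\pi$ and $d\mu_0/d\pi\le M$. Projection-based rejection sampler for given $y$: repeat {draw $X\sim\mathcal{N}(\operatorname{proj}_K(y),\eta I_d)$ and independent $U\sim\mathcal{U}[0,1]$; accept $X$ if $U\le\exp(-\frac1\eta\langle X-\operatorname{proj}_K(y),\operatorname{proj}_K(y)-y\rangle)\mathbf{1}_K(X)$}. Its expected number of trials is $n_y=\frac{\int_{\mathbb{R}^d}\exp(-\mathcal{P}_1(x))dx}{\int_K\exp(-\frac{1}{2\eta}\|x-y\|^2)dx}$ where $\mathcal{P}_1(x)=\frac{1}{2\eta}\|x-\operatorname{proj}_K(y)\|^2+\frac{1}{2\eta}\|\operatorname{proj}_K(y)-y\|^2$;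 $\operatorname{proj}_K$ is the Euclidean projection onto $K$. *)

theory Defs
  imports "HOL-Probability.Probability"
begin

definition gauss_dens :: "real \<Rightarrow> 'a::euclidean_space \<Rightarrow> real" where
  "gauss_dens \<eta> z = (2 * pi * \<eta>) powr (- real DIM('a) / 2) * exp (- ((norm z)^2) / (2 * \<eta>))"

text \<open>Step (1) of ASF: law of y = x + N(0, eta I) when x has law mu.\<close>
definition asf_forward :: "real \<Rightarrow> 'a::euclidean_space measure \<Rightarrow> 'a measure" where
  "asf_forward \<eta> \<mu> = density lborel (\<lambda>y. \<integral>\<^sup>+ x. ennreal (gauss_dens \<eta> (y - x)) \<partial>\<mu>)"

definition asf_Z :: "real \<Rightarrow> 'a::euclidean_space set \<Rightarrow> 'a \<Rightarrow> ennreal" where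
  "asf_Z \<eta> K y = (\<integral>\<^sup>+ x. ennreal (exp (- ((norm (x - y))^2) / (2 * \<eta>)) * indicator K x) \<partial>lborel)"

text \<open>Step (2) of ASF: law of x' whose conditional density given y is
  proportional to exp(-|x-y|^2/(2 eta)) 1_K(x), when y has law nu.\<close>
definition asf_backward :: "real \<Rightarrow> 'a::euclidean_space set \<Rightarrow> 'a measure \<Rightarrow> 'a measure" where
  "asf_backward \<eta> K \<nu> = density lborel (\<lambda>x. \<integral>\<^sup>+ y.
      ennreal (exp (- ((norm (x - y))^2) / (2 * \<eta>)) * indicator K x) / asf_Z \<eta> K y \<partial>\<nu>)"

definition asf_x_law :: "real \<Rightarrow> 'a::euclidean_space set \<Rightarrow> 'a measure \<Rightarrow> nat \<Rightarrow> 'a measure" where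
  "asf_x_law \<eta> K \<mu>0 k = ((asf_backward \<eta> K \<circ> asf_forward \<eta>) ^^ k) \<mu>0"

definition asf_y_law :: "real \<Rightarrow> 'a::euclidean_space set \<Rightarrow> 'a measure \<Rightarrow> nat \<Rightarrow> 'a measure" where
  "asf_y_law \<eta> K \<mu>0 k = asf_forward \<eta> (asf_x_law \<eta> K \<mu>0 k)"

definition P1 :: "real \<Rightarrow> 'a::euclidean_space set \<Rightarrow> 'a \<Rightarrow> 'a \<Rightarrow> real" where
  "P1 \<eta> K y x = (norm (x - closest_point K y))^2 / (2 * \<eta>)
                 + (norm (closest_point K y - y))^2 / (2 * \<eta>)"

definition n_trials :: "real \<Rightarrow> 'a::euclidean_space set \<Rightarrow> 'a \<Rightarrow> ennreal" where
  "n_trials \<eta> K y = (\<integral>\<^sup>+ x. ennreal (exp (- P1 \<eta> K y x)) \<partial>lborel) / asf_Z \<eta> K y"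

definition warm :: "real \<Rightarrow> 'a measure \<Rightarrow> 'a measure \<Rightarrow> bool" where
  "warm M \<mu>0 \<pi> \<longleftrightarrow> absolutely_continuous \<pi> \<mu>0 \<and> (AE x in \<pi>. RN_deriv \<pi> \<mu>0 x \<le> ennreal M)"

end

theory Submission
  imports Defs "HOL-Real_Asymp.Real_Asymp"
begin

(* Warmness survives both half-steps of ASF.  If x has Lebesgue density at most c 1_K, then
   y = x + N(0, eta I) has density at most c Z(y) / (2 pi eta)^(d/2), where Z(y) is the normalising
   constant of step (2); and step (2) turns such a y back into a point with density at most c 1_K.
   Since n_y = exp(-dist(y,K)^2/(2 eta)) (2 pi eta)^(d/2) / Z(y), the factor Z(y) cancels, and with
   c = M / vol K and eta = 1/d^2 we get E[n_y] <= c * int exp(-d^2 dist(y,K)^2 / 2) dy.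
   Because K is convex and contains the unit ball, {y. dist(y,K) <= t} lies in (1 + t) K, of volume
   at most e^(d t) vol K; a layer-cake integration then bounds the integral by vol K (1 + sqrt(2 pi e)). *)

lemma nn_integral_gaussian:
  fixes \<mu> \<sigma> :: real assumes "\<sigma> > 0"
  shows "(\<integral>\<^sup>+x. ennreal (exp (- (x - \<mu>)\<^sup>2 / (2 * \<sigma>\<^sup>2))) \<partial>lborel) = ennreal (sqrt (2 * pi * \<sigma>\<^sup>2))"
proof -
  interpret normal: prob_space "density lborel (\<lambda>x. ennreal (normal_density \<mu> \<sigma> x))"
    using prob_space_normal_density[OF assms] .
  have "(\<integral>\<^sup>+x. ennreal (normal_density \<mu> \<sigma> x) \<partial>lborel) = 1"
    using normal.emeasure_space_1 by (simp add: emeasure_density)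
  moreover have "ennreal (exp (- (x - \<mu>)\<^sup>2 / (2 * \<sigma>\<^sup>2)))
      = ennreal (sqrt (2 * pi * \<sigma>\<^sup>2)) * ennreal (normal_density \<mu> \<sigma> x)" for x
    using assms by (simp add: normal_density_def ennreal_mult''[symmetric])
  ultimately show ?thesis by (simp add: nn_integral_cmult)
qed

lemma nn_integral_gaussian_euclidean:
  fixes a :: "'a::euclidean_space" assumes "\<eta> > 0"
  shows "(\<integral>\<^sup>+x. ennreal (exp (- (norm (x - a))\<^sup>2 / (2 * \<eta>))) \<partial>lborel)
    = ennreal (sqrt (2 * pi * \<eta>) ^ DIM('a))"
proof -
  have coordinatewise: "ennreal (exp (- (norm (x - a))\<^sup>2 / (2 * \<eta>)))
      = (\<Prod>b\<in>Basis. ennreal (exp (- (x \<bullet> b - a \<bullet> b)\<^sup>2 / (2 * (sqrt \<eta>)\<^sup>2))))" for x :: 'a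
  proof -
    have "(norm (x - a))\<^sup>2 = (\<Sum>b\<in>Basis. (x \<bullet> b - a \<bullet> b)\<^sup>2)"
      by (subst power2_norm_eq_inner, subst euclidean_inner) (simp add: power2_eq_square inner_diff_left)
    then have "- (norm (x - a))\<^sup>2 / (2 * \<eta>) = (\<Sum>b\<in>Basis. - (x \<bullet> b - a \<bullet> b)\<^sup>2 / (2 * (sqrt \<eta>)\<^sup>2))"
      using assms by (simp add: sum_divide_distrib[symmetric] sum_negf)
    then show ?thesis
      by (simp add: exp_sum prod_ennreal)
  qed
  have "(\<integral>\<^sup>+x. ennreal (exp (- (norm (x - a))\<^sup>2 / (2 * \<eta>))) \<partial>lborel)
      = (\<Prod>b\<in>Basis. \<integral>\<^sup>+t. ennreal (exp (- (t - a \<bullet> b)\<^sup>2 / (2 * (sqrt \<eta>)\<^sup>2))) \<partial>lborel)"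
    unfolding coordinatewise
    by (rule nn_integral_lborel_prod[where f = "\<lambda>b t. ennreal (exp (- (t - a \<bullet> b)\<^sup>2 / (2 * (sqrt \<eta>)\<^sup>2)))"]) auto
  also have "\<dots> = ennreal (sqrt (2 * pi * \<eta>) ^ DIM('a))"
    using assms by (simp only: nn_integral_gaussian[of "sqrt \<eta>"] real_sqrt_gt_zero) (simp add: ennreal_power)
  finally show ?thesis .
qed

lemma gauss_dens_eq:
  assumes "\<eta> > 0"
  shows "gauss_dens \<eta> (z::'a::euclidean_space) = exp (- (norm z)\<^sup>2 / (2 * \<eta>)) / sqrt (2 * pi * \<eta>) ^ DIM('a)"
proof -
  have "sqrt (2 * pi * \<eta>) ^ DIM('a) = (2 * pi * \<eta>) powr (real DIM('a) / 2)"
    using assms by (simp add: powr_half_sqrt[symmetric] powr_realpow[symmetric] powr_powr)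
  then show ?thesis
    by (simp add: gauss_dens_def powr_minus_divide)
qed

lemma nn_integral_gaussian_tail:
  fixes c d s :: real assumes "d > 0" and "c \<le> d * s"
  shows "(\<integral>\<^sup>+t. ennreal (d * (d * t - c) * exp (- (d * t - c)\<^sup>2 / 2)) * indicator {s..} t \<partial>lborel)
    = ennreal (exp (- (d * s - c)\<^sup>2 / 2))"
proof -
  have "(\<integral>\<^sup>+t. ennreal (d * (d * t - c) * exp (- (d * t - c)\<^sup>2 / 2)) * indicator {s..} t \<partial>lborel)
      = ennreal (0 - (- exp (- (d * s - c)\<^sup>2 / 2)))"
  proof (rule nn_integral_FTC_atLeast)
    show "((\<lambda>t. - exp (- (d * t - c)\<^sup>2 / 2)) has_real_derivative d * (d * t - c) * exp (- (d * t - c)\<^sup>2 / 2)) (at t)"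
      for t
      by (auto intro!: derivative_eq_intros simp: power2_eq_square field_simps)
    show "0 \<le> d * (d * t - c) * exp (- (d * t - c)\<^sup>2 / 2)" if "s \<le> t" for t
    proof -
      have "c \<le> d * t"
        using assms mult_left_mono[OF that, of d] by linarith
      then show ?thesis using \<open>d > 0\<close> by simp
    qed
    show "((\<lambda>t. - exp (- (d * t - c)\<^sup>2 / 2)) \<longlongrightarrow> 0) at_top"
      using \<open>d > 0\<close> by real_asymp
  qed simp
  then show ?thesis by simp
qed

lemma nn_integral_gaussian_head:
  "(\<integral>\<^sup>+x. ennreal ((1 - x) * exp (- (x - 1)\<^sup>2 / 2)) * indicator {0..1} x \<partial>lborel) = ennreal (1 - exp (- 1 / 2))"
proof -
  have "(\<integral>\<^sup>+x. ennreal ((1 - x) * exp (- (x - 1)\<^sup>2 / 2)) * indicator {0..1} x \<partial>lborel)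
      = ennreal (exp (- (1 - 1)\<^sup>2 / 2) - exp (- (0 - 1)\<^sup>2 / 2))"
    by (rule nn_integral_FTC_Icc) (auto intro!: derivative_eq_intros simp: power2_eq_square field_simps)
  then show ?thesis by simp
qed

lemma nn_integral_first_moment_shifted_gaussian_le:
  "(\<integral>\<^sup>+x. ennreal (x * exp (- (x - 1)\<^sup>2 / 2)) * indicator {0..} x \<partial>lborel) \<le> ennreal (exp (- 1 / 2) + sqrt (2 * pi))"
proof -
  define G where "G x = exp (- (x - 1)\<^sup>2 / 2)" for x :: real
  define q where "q = exp (- 1 / 2 :: real)"
  have q: "0 < q" "q < 1" unfolding q_def by auto
  have [measurable]: "G \<in> borel_measurable borel" unfolding G_def by measurable
  have G_nonneg: "0 \<le> G x" for x unfolding G_def by simp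
  have rearrange: "ennreal (x * G x) * indicator {0..} x + ennreal ((1 - x) * G x) * indicator {0..1} x
      = ennreal (G x) * indicator {0..} x + ennreal ((x - 1) * G x) * indicator {1..} x" for x
  proof -
    have "ennreal (x * G x) + ennreal ((1 - x) * G x) = ennreal (G x)" if "0 \<le> x" "x \<le> 1"
      using that G_nonneg[of x] mult_right_mono[of x 1 "G x"]
      by (subst ennreal_plus[symmetric]) (auto simp: algebra_simps)
    moreover have "ennreal (x * G x) = ennreal (G x) + ennreal ((x - 1) * G x)" if "1 \<le> x"
      using that G_nonneg[of x] mult_right_mono[of 1 x "G x"] by (subst ennreal_plus[symmetric]) (auto simp: algebra_simps)
    ultimately show ?thesis
      by (auto simp: indicator_def)
  qed
  have "(\<integral>\<^sup>+x. ennreal (x * G x) * indicator {0..} x \<partial>lborel) + ennreal (1 - q)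
      = (\<integral>\<^sup>+x. ennreal (x * G x) * indicator {0..} x + ennreal ((1 - x) * G x) * indicator {0..1} x \<partial>lborel)"
    using nn_integral_gaussian_head by (simp add: nn_integral_add G_def q_def)
  also have "\<dots> = (\<integral>\<^sup>+x. ennreal (G x) * indicator {0..} x + ennreal ((x - 1) * G x) * indicator {1..} x \<partial>lborel)"
    by (simp only: rearrange)
  also have "\<dots> = (\<integral>\<^sup>+x. ennreal (G x) * indicator {0..} x \<partial>lborel) + 1"
    using nn_integral_gaussian_tail[of 1 1 1] by (simp add: nn_integral_add G_def)
  also have "\<dots> \<le> (\<integral>\<^sup>+x. ennreal (G x) \<partial>lborel) + 1"
    by (intro add_right_mono nn_integral_mono) (simp add: indicator_def)
  also have "\<dots> = ennreal (sqrt (2 * pi) + 1)"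
    using nn_integral_gaussian[of 1 1] unfolding G_def by simp
  also have "\<dots> = ennreal (sqrt (2 * pi) + q) + ennreal (1 - q)"
    using q by (subst ennreal_plus[symmetric]) auto
  finally show ?thesis
    by (simp add: G_def q_def add.commute)
qed

lemma nn_integral_tilted_gaussian_weight_le:
  fixes d :: real assumes "d > 0"
  shows "(\<integral>\<^sup>+t. ennreal (d\<^sup>2 * t * exp (- (d * t)\<^sup>2 / 2 + d * t)) * indicator {0..} t \<partial>lborel)
    \<le> ennreal (1 + sqrt (2 * pi * exp 1))"
proof -
  define g where "g x = ennreal (x * exp (- (x - 1)\<^sup>2 / 2)) * indicator {0..} x" for x :: real
  have [measurable]: "g \<in> borel_measurable borel" unfolding g_def by measurable
  have "ennreal (d\<^sup>2 * t * exp (- (d * t)\<^sup>2 / 2 + d * t)) * indicator {0..} t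
      = ennreal (exp (1 / 2)) * (ennreal d * g (d * t))" for t
  proof -
    have exponent: "- (d * t)\<^sup>2 / 2 + d * t = 1 / 2 + - (d * t - 1)\<^sup>2 / 2"
      by (simp add: power2_eq_square field_simps)
    have real_eq: "d\<^sup>2 * t * exp (- (d * t)\<^sup>2 / 2 + d * t) = exp (1 / 2) * (d * ((d * t) * exp (- (d * t - 1)\<^sup>2 / 2)))"
      unfolding exponent exp_add by (simp add: power2_eq_square mult_ac)
    show ?thesis
      using \<open>d > 0\<close> unfolding g_def real_eq
      by (cases "t \<ge> 0") (simp_all add: ennreal_mult zero_le_mult_iff)
  qed
  then have "(\<integral>\<^sup>+t. ennreal (d\<^sup>2 * t * exp (- (d * t)\<^sup>2 / 2 + d * t)) * indicator {0..} t \<partial>lborel)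
      = ennreal (exp (1 / 2)) * (ennreal \<bar>d\<bar> * (\<integral>\<^sup>+t. g (d * t) \<partial>lborel))"
    using \<open>d > 0\<close> by (simp add: nn_integral_cmult)
  also have "\<dots> = ennreal (exp (1 / 2)) * (\<integral>\<^sup>+x. g x \<partial>lborel)"
    using nn_integral_real_affine[of g d 0] \<open>d > 0\<close> by simp
  also have "\<dots> \<le> ennreal (exp (1 / 2)) * ennreal (exp (- 1 / 2) + sqrt (2 * pi))"
    unfolding g_def by (intro mult_left_mono nn_integral_first_moment_shifted_gaussian_le) simp
  also have "\<dots> = ennreal (1 + sqrt (2 * pi * exp 1))"
  proof -
    have "sqrt (exp 1) = exp (1 / 2 :: real)"
      by (rule real_sqrt_unique) (simp_all add: power2_eq_square flip: exp_add)
    then have "exp (1 / 2) * (exp (- 1 / 2) + sqrt (2 * pi)) = 1 + sqrt (2 * pi * exp 1)"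
      by (simp add: real_sqrt_mult distrib_left mult_ac flip: exp_add)
    moreover have "ennreal (exp (1 / 2)) * ennreal (exp (- 1 / 2) + sqrt (2 * pi))
        = ennreal (exp (1 / 2) * (exp (- 1 / 2) + sqrt (2 * pi)))"
      by (rule ennreal_mult[symmetric]) auto
    ultimately show ?thesis by (simp only:)
  qed
  finally show ?thesis .
qed

lemma nn_integral_exp_neg_square_layer_cake:
  fixes \<phi> :: "'b \<Rightarrow> real" and d :: real
  assumes "sigma_finite_measure M" and [measurable]: "\<phi> \<in> borel_measurable M"
    and \<phi>_nonneg: "\<And>x. x \<in> space M \<Longrightarrow> 0 \<le> \<phi> x" and "d > 0"
  shows "(\<integral>\<^sup>+x. ennreal (exp (- (d * \<phi> x)\<^sup>2 / 2)) \<partial>M)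
    = (\<integral>\<^sup>+t. ennreal (d\<^sup>2 * t * exp (- (d * t)\<^sup>2 / 2)) * emeasure M {x \<in> space M. \<phi> x \<le> t} \<partial>lborel)"
proof -
  define w where "w t = ennreal (d\<^sup>2 * t * exp (- (d * t)\<^sup>2 / 2))" for t
  have [measurable]: "w \<in> borel_measurable borel" unfolding w_def by measurable
  interpret pair_sigma_finite M lborel
    using assms(1) lborel.sigma_finite_measure_axioms by (simp add: pair_sigma_finite_def)
  have "(\<integral>\<^sup>+x. ennreal (exp (- (d * \<phi> x)\<^sup>2 / 2)) \<partial>M) = (\<integral>\<^sup>+x. \<integral>\<^sup>+t. w t * indicator {\<phi> x..} t \<partial>lborel \<partial>M)"
    using nn_integral_gaussian_tail[of d 0] \<phi>_nonneg \<open>d > 0\<close>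
    by (intro nn_integral_cong) (simp add: w_def power2_eq_square mult.assoc)
  also have "\<dots> = (\<integral>\<^sup>+t. \<integral>\<^sup>+x. w t * indicator {x \<in> space M. \<phi> x \<le> t} x \<partial>M \<partial>lborel)"
    by (subst Fubini') (auto intro!: nn_integral_cong simp: indicator_def)
  also have "\<dots> = (\<integral>\<^sup>+t. w t * emeasure M {x \<in> space M. \<phi> x \<le> t} \<partial>lborel)"
    by (simp add: nn_integral_cmult_indicator)
  finally show ?thesis unfolding w_def .
qed

lemma emeasure_lborel_scaleR_image:
  fixes K :: "'a::euclidean_space set"
  assumes "closed K" and "a > 0"
  shows "emeasure lborel ((\<lambda>x. a *\<^sub>R x) ` K) = ennreal (a ^ DIM('a)) * emeasure lborel K"
proof -
  have "closed ((\<lambda>x. a *\<^sub>R x) ` K)"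
    using assms closed_scaling by blast
  moreover have "emeasure lebesgue ((\<lambda>x. a *\<^sub>R x + 0) ` K) = \<bar>a\<bar> ^ DIM('a) * emeasure lebesgue K"
    by (rule emeasure_lebesgue_affine)
  ultimately show ?thesis
    using assms by simp
qed

lemma mem_scaleR_image_if_dist_le:
  fixes K :: "'a::real_normed_vector set"
  assumes "convex K" and "cball 0 1 \<subseteq> K" and "p \<in> K" and "t \<ge> 0" and "norm (y - p) \<le> t"
  shows "y \<in> (\<lambda>x. (1 + t) *\<^sub>R x) ` K"
proof -
  have "(1 / (1 + t)) *\<^sub>R y \<in> K"
  proof (cases "t = 0")
    case True
    then show ?thesis using assms by simp
  next
    case False
    then have "t > 0" using assms by simp
    have "(1 / t) *\<^sub>R (y - p) \<in> K"
      using assms \<open>t > 0\<close> by (intro subsetD[OF \<open>cball 0 1 \<subseteq> K\<close>]) (simp add: divide_le_eq_1)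
    then have "(1 / (1 + t)) *\<^sub>R p + (t / (1 + t)) *\<^sub>R ((1 / t) *\<^sub>R (y - p)) \<in> K"
      using assms \<open>t > 0\<close> by (intro convexD) (auto simp: field_simps)
    also have "(1 / (1 + t)) *\<^sub>R p + (t / (1 + t)) *\<^sub>R ((1 / t) *\<^sub>R (y - p)) = (1 / (1 + t)) *\<^sub>R y"
      using \<open>t > 0\<close> by (simp add: algebra_simps)
    finally show ?thesis .
  qed
  moreover have "y = (1 + t) *\<^sub>R ((1 / (1 + t)) *\<^sub>R y)"
    using assms by simp
  ultimately show ?thesis by blast
qed

lemma emeasure_closest_point_dist_le:
  fixes K :: "'a::euclidean_space set" and t :: real
  assumes "closed K" and "convex K" and "cball 0 1 \<subseteq> K" and "t \<ge> 0"
  shows "emeasure lborel {y. norm (closest_point K y - y) \<le> t} \<le> ennreal (exp (real DIM('a) * t)) * emeasure lborel K"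
proof -
  have "K \<noteq> {}" using assms by auto
  have "{y. norm (closest_point K y - y) \<le> t} \<subseteq> (\<lambda>x. (1 + t) *\<^sub>R x) ` K"
    using assms closest_point_in_set[OF \<open>closed K\<close> \<open>K \<noteq> {}\<close>]
    by (auto intro!: mem_scaleR_image_if_dist_le simp: norm_minus_commute)
  then have "emeasure lborel {y. norm (closest_point K y - y) \<le> t} \<le> emeasure lborel ((\<lambda>x. (1 + t) *\<^sub>R x) ` K)"
    using closed_scaling[OF \<open>closed K\<close>] by (intro emeasure_mono) auto
  also have "\<dots> = ennreal ((1 + t) ^ DIM('a)) * emeasure lborel K"
    using assms by (intro emeasure_lborel_scaleR_image) auto
  also have "\<dots> \<le> ennreal (exp (real DIM('a) * t)) * emeasure lborel K"
  proof (intro mult_right_mono ennreal_leI)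
    have "(1 + t) ^ DIM('a) \<le> exp t ^ DIM('a)"
      using assms by (intro power_mono) (auto simp: add.commute exp_ge_add_one_self)
    then show "(1 + t) ^ DIM('a) \<le> exp (real DIM('a) * t)"
      by (simp add: exp_of_nat_mult)
  qed simp
  finally show ?thesis .
qed

lemma nn_integral_exp_neg_square_dist_le:
  fixes K :: "'a::euclidean_space set" and d :: real
  assumes "closed K" and "convex K" and "ball 0 1 \<subseteq> K" and "d \<ge> DIM('a)"
  shows "(\<integral>\<^sup>+y. ennreal (exp (- (d * norm (closest_point K y - y))\<^sup>2 / 2)) \<partial>lborel)
    \<le> emeasure lborel K * ennreal (1 + sqrt (2 * pi * exp 1))"
proof -
  have "cball 0 1 \<subseteq> K"
    using closure_minimal[OF assms(3,1)] by simp
  then have "K \<noteq> {}"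
    by auto
  have "d > 0"
    using assms(4) DIM_positive[where 'a='a] by linarith
  have [measurable]: "(\<lambda>y. norm (closest_point K y - y)) \<in> borel_measurable borel"
    using assms \<open>K \<noteq> {}\<close>
    by (intro borel_measurable_continuous_onI continuous_intros continuous_on_closest_point)
  have "(\<integral>\<^sup>+y. ennreal (exp (- (d * norm (closest_point K y - y))\<^sup>2 / 2)) \<partial>lborel)
      = (\<integral>\<^sup>+t. ennreal (d\<^sup>2 * t * exp (- (d * t)\<^sup>2 / 2)) * emeasure lborel {y. norm (closest_point K y - y) \<le> t} \<partial>lborel)"
    using nn_integral_exp_neg_square_layer_cake[OF lborel.sigma_finite_measure_axioms,
        of "\<lambda>y. norm (closest_point K y - y)" d] \<open>d > 0\<close>
    by simp
  also have "\<dots> \<le> (\<integral>\<^sup>+t. emeasure lborel K * (ennreal (d\<^sup>2 * t * exp (- (d * t)\<^sup>2 / 2 + d * t)) * indicator {0..} t) \<partial>lborel)"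
  proof (intro nn_integral_mono)
    fix t :: real
    show "ennreal (d\<^sup>2 * t * exp (- (d * t)\<^sup>2 / 2)) * emeasure lborel {y. norm (closest_point K y - y) \<le> t}
        \<le> emeasure lborel K * (ennreal (d\<^sup>2 * t * exp (- (d * t)\<^sup>2 / 2 + d * t)) * indicator {0..} t)"
    proof (cases "t \<ge> 0")
      case False
      then have "{y. norm (closest_point K y - y) \<le> t} = {}"
        by (auto dest: order_trans[OF norm_ge_zero])
      then show ?thesis by simp
    next
      case True
      have "exp (real DIM('a) * t) \<le> exp (d * t)"
        using True assms by (simp add: mult_right_mono)
      then have "emeasure lborel {y. norm (closest_point K y - y) \<le> t} \<le> ennreal (exp (d * t)) * emeasure lborel K"
        using emeasure_closest_point_dist_le[OF assms(1,2) \<open>cball 0 1 \<subseteq> K\<close> True]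
        by (meson ennreal_leI mult_right_mono order_trans zero_le)
      then have "ennreal (d\<^sup>2 * t * exp (- (d * t)\<^sup>2 / 2)) * emeasure lborel {y. norm (closest_point K y - y) \<le> t}
          \<le> ennreal (d\<^sup>2 * t * exp (- (d * t)\<^sup>2 / 2)) * (ennreal (exp (d * t)) * emeasure lborel K)"
        by (rule mult_left_mono) simp
      also have "\<dots> = emeasure lborel K * ennreal (d\<^sup>2 * t * exp (- (d * t)\<^sup>2 / 2) * exp (d * t))"
        using True by (simp add: ennreal_mult mult_ac)
      also have "d\<^sup>2 * t * exp (- (d * t)\<^sup>2 / 2) * exp (d * t) = d\<^sup>2 * t * exp (- (d * t)\<^sup>2 / 2 + d * t)"
        by (simp only: exp_add mult.assoc)
      finally show ?thesis using True by simp
    qed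
  qed
  also have "\<dots> = emeasure lborel K * (\<integral>\<^sup>+t. ennreal (d\<^sup>2 * t * exp (- (d * t)\<^sup>2 / 2 + d * t)) * indicator {0..} t \<partial>lborel)"
    by (rule nn_integral_cmult) measurable
  also have "\<dots> \<le> emeasure lborel K * ennreal (1 + sqrt (2 * pi * exp 1))"
    using \<open>d > 0\<close> by (intro mult_left_mono nn_integral_tilted_gaussian_weight_le) simp_all
  finally show ?thesis .
qed

(* With f = c 1_K this says that mu is (c vol K)-warm with respect to the uniform distribution on K. *)
definition has_density_le :: "('a::euclidean_space \<Rightarrow> ennreal) \<Rightarrow> 'a measure \<Rightarrow> bool" where
  "has_density_le f \<mu> \<longleftrightarrow> (\<exists>D \<in> borel_measurable borel. \<mu> = density lborel D \<and> (\<forall>x. D x \<le> f x))"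

lemma nn_integral_le_if_has_density_le:
  assumes "has_density_le f \<mu>" and [measurable]: "g \<in> borel_measurable borel"
  shows "(\<integral>\<^sup>+x. g x \<partial>\<mu>) \<le> (\<integral>\<^sup>+x. f x * g x \<partial>lborel)"
proof -
  obtain D where [measurable]: "D \<in> borel_measurable borel" and "\<mu> = density lborel D" and "\<And>x. D x \<le> f x"
    using assms(1) unfolding has_density_le_def by blast
  then show ?thesis
    by (simp add: nn_integral_density nn_integral_mono mult_right_mono)
qed

lemma ennreal_mult_cancel_divide:
  fixes a e z :: ennreal
  assumes "z \<noteq> 0" and "z \<noteq> \<infinity>"
  shows "a * z * (e / z) = a * e"
proof -
  have "a * z * (e / z) = a * (e * z / z)"
    by (simp add: ennreal_times_divide mult_ac)
  then show ?thesis
    using assms by (simp add: ennreal_mult_divide_eq)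
qed

lemma ennreal_divide_mult_cancel:
  fixes a e z :: ennreal
  assumes "z \<noteq> 0" and "z \<noteq> \<infinity>"
  shows "a / z * (e * z) = a * e"
  using assms by (simp add: ennreal_divide_times ennreal_mult_divide_eq)

lemma warm_imp_has_density_le:
  fixes K :: "'a::euclidean_space set" and \<mu>0 :: "'a measure"
  assumes [measurable]: "K \<in> sets borel" and "emeasure lborel K \<noteq> 0" and "emeasure lborel K \<noteq> \<infinity>"
    and "sets \<mu>0 = sets borel" and "warm M \<mu>0 (uniform_measure lborel K)"
  shows "has_density_le (\<lambda>x. ennreal M / emeasure lborel K * indicator K x) \<mu>0"
proof -
  let ?\<pi> = "uniform_measure lborel K" and ?V = "emeasure lborel K"
  interpret \<pi>: prob_space ?\<pi>
    using prob_space_uniform_measure assms(2,3) .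
  have ac: "absolutely_continuous ?\<pi> \<mu>0" and bounded: "AE x in ?\<pi>. RN_deriv ?\<pi> \<mu>0 x \<le> ennreal M"
    using assms(5) unfolding warm_def by auto
  have [measurable]: "RN_deriv ?\<pi> \<mu>0 \<in> borel_measurable borel"
    using borel_measurable_RN_deriv[of ?\<pi> \<mu>0] by (simp cong: measurable_cong_sets)
  define D where "D x = indicator K x / ?V * min (RN_deriv ?\<pi> \<mu>0 x) (ennreal M)" for x
  have [measurable]: "D \<in> borel_measurable borel"
    unfolding D_def by measurable
  have "\<mu>0 = density ?\<pi> (RN_deriv ?\<pi> \<mu>0)"
    using \<pi>.density_RN_deriv[OF ac] assms(4) by simp
  also have "\<dots> = density ?\<pi> (\<lambda>x. min (RN_deriv ?\<pi> \<mu>0 x) (ennreal M))"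
    using bounded by (intro density_cong) (auto elim!: AE_mp)
  also have "\<dots> = density lborel D"
    unfolding uniform_measure_def D_def by (subst density_density_eq) auto
  finally have "\<mu>0 = density lborel D" .
  moreover have "D x \<le> ennreal M / ?V * indicator K x" for x
  proof -
    have "min (RN_deriv ?\<pi> \<mu>0 x) (ennreal M) / ?V \<le> ennreal M / ?V"
      by (intro divide_right_mono_ennreal) simp
    then show ?thesis
      unfolding D_def by (simp add: indicator_def ennreal_divide_times mult.commute)
  qed
  ultimately show ?thesis
    unfolding has_density_le_def by (intro bexI[of _ D]) auto
qed

lemma borel_measurable_gauss_dens[measurable]: "gauss_dens \<eta> \<in> borel_measurable borel"
  unfolding gauss_dens_def[abs_def] by measurable

lemma borel_measurable_asf_Z[measurable]:
  assumes [measurable]: "K \<in> sets borel"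
  shows "asf_Z \<eta> K \<in> borel_measurable borel"
  unfolding asf_Z_def[abs_def] by measurable

lemma asf_Z_pos:
  assumes [measurable]: "K \<in> sets borel" and "emeasure lborel K \<noteq> 0"
  shows "asf_Z \<eta> K y > 0"
proof (rule ccontr)
  assume "\<not> asf_Z \<eta> K y > 0"
  then have "(\<integral>\<^sup>+x. ennreal (exp (- (norm (x - y))\<^sup>2 / (2 * \<eta>)) * indicator K x) \<partial>lborel) = 0"
    unfolding asf_Z_def by (simp only: not_gr_zero)
  then have "AE x in lborel. ennreal (exp (- (norm (x - y))\<^sup>2 / (2 * \<eta>)) * indicator K x) = 0"
    by (subst (asm) nn_integral_0_iff_AE) measurable
  then have "AE x in lborel. x \<notin> K"
    by eventually_elim (simp add: indicator_def)
  then have "emeasure lborel K = 0"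
    using AE_iff_null_sets[of K lborel] by auto
  with assms(2) show False ..
qed

context
  fixes \<eta> :: real
  assumes \<eta>_pos: "\<eta> > 0"
begin

lemma asf_Z_less_top: "asf_Z \<eta> K (y::'a::euclidean_space) < \<infinity>"
proof -
  have "asf_Z \<eta> K y \<le> (\<integral>\<^sup>+x. ennreal (exp (- (norm (x - y))\<^sup>2 / (2 * \<eta>))) \<partial>lborel)"
    unfolding asf_Z_def by (intro nn_integral_mono) (simp add: indicator_def)
  also have "\<dots> < \<infinity>"
    using nn_integral_gaussian_euclidean[OF \<eta>_pos, of y] by simp
  finally show ?thesis .
qed

lemma asf_forward_density:
  fixes D :: "'a::euclidean_space \<Rightarrow> ennreal"
  assumes [measurable]: "D \<in> borel_measurable borel"
  shows "asf_forward \<eta> (density lborel D)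
    = density lborel (\<lambda>y. \<integral>\<^sup>+x. D x * ennreal (gauss_dens \<eta> (y - x)) \<partial>lborel)"
  unfolding asf_forward_def by (intro density_cong) (auto simp: nn_integral_density)

lemma has_density_le_asf_forward:
  fixes K :: "'a::euclidean_space set"
  assumes [measurable]: "K \<in> sets borel" and "has_density_le (\<lambda>x. c * indicator K x) \<mu>"
  shows "has_density_le (\<lambda>y. c / ennreal (sqrt (2 * pi * \<eta>) ^ DIM('a)) * asf_Z \<eta> K y) (asf_forward \<eta> \<mu>)"
proof -
  let ?G = "ennreal (sqrt (2 * pi * \<eta>) ^ DIM('a))"
  obtain D where [measurable]: "D \<in> borel_measurable borel" and \<mu>: "\<mu> = density lborel D"
    and D_le: "\<And>x. D x \<le> c * indicator K x"
    using assms(2) unfolding has_density_le_def by blast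
  have "(\<integral>\<^sup>+x. D x * ennreal (gauss_dens \<eta> (y - x)) \<partial>lborel)
      \<le> (\<integral>\<^sup>+x. c / ?G * ennreal (exp (- (norm (x - y))\<^sup>2 / (2 * \<eta>)) * indicator K x) \<partial>lborel)" for y
  proof (intro nn_integral_mono)
    fix x
    have "ennreal (gauss_dens \<eta> (y - x)) = ennreal (exp (- (norm (x - y))\<^sup>2 / (2 * \<eta>))) / ?G"
      using \<eta>_pos by (simp add: gauss_dens_eq divide_ennreal norm_minus_commute)
    then have "D x * ennreal (gauss_dens \<eta> (y - x))
        \<le> c * indicator K x * (ennreal (exp (- (norm (x - y))\<^sup>2 / (2 * \<eta>))) / ?G)"
      using D_le[of x] by (simp add: mult_right_mono)
    then show "D x * ennreal (gauss_dens \<eta> (y - x))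
        \<le> c / ?G * ennreal (exp (- (norm (x - y))\<^sup>2 / (2 * \<eta>)) * indicator K x)"
      by (cases "x \<in> K") (simp_all add: ennreal_divide_times)
  qed
  also have "(\<integral>\<^sup>+x. c / ?G * ennreal (exp (- (norm (x - y))\<^sup>2 / (2 * \<eta>)) * indicator K x) \<partial>lborel)
      = c / ?G * asf_Z \<eta> K y" for y
    unfolding asf_Z_def by (rule nn_integral_cmult) measurable
  finally show ?thesis
    unfolding has_density_le_def \<mu> asf_forward_density[OF \<open>D \<in> borel_measurable borel\<close>]
    by (intro bexI[of _ "\<lambda>y. \<integral>\<^sup>+x. D x * ennreal (gauss_dens \<eta> (y - x)) \<partial>lborel"]) auto
qed

lemma asf_backward_density:
  fixes D :: "'a::euclidean_space \<Rightarrow> ennreal"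
  assumes [measurable]: "D \<in> borel_measurable borel" and [measurable]: "K \<in> sets borel"
  shows "asf_backward \<eta> K (density lborel D) = density lborel (\<lambda>x. \<integral>\<^sup>+y.
      D y * (ennreal (exp (- (norm (x - y))\<^sup>2 / (2 * \<eta>)) * indicator K x) / asf_Z \<eta> K y) \<partial>lborel)"
  unfolding asf_backward_def by (intro density_cong) (auto simp: nn_integral_density)

lemma has_density_le_asf_backward:
  fixes K :: "'a::euclidean_space set"
  assumes [measurable]: "K \<in> sets borel" and "emeasure lborel K \<noteq> 0"
    and "has_density_le (\<lambda>y. c / ennreal (sqrt (2 * pi * \<eta>) ^ DIM('a)) * asf_Z \<eta> K y) \<nu>"
  shows "has_density_le (\<lambda>x. c * indicator K x) (asf_backward \<eta> K \<nu>)"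
proof -
  let ?G = "ennreal (sqrt (2 * pi * \<eta>) ^ DIM('a))"
  let ?E = "\<lambda>x y. ennreal (exp (- (norm (x - y))\<^sup>2 / (2 * \<eta>)) * indicator K x)"
  obtain D where [measurable]: "D \<in> borel_measurable borel" and \<nu>: "\<nu> = density lborel D"
    and D_le: "\<And>y. D y \<le> c / ?G * asf_Z \<eta> K y"
    using assms(3) unfolding has_density_le_def by blast
  have Z_ne: "asf_Z \<eta> K y \<noteq> 0" "asf_Z \<eta> K y \<noteq> \<infinity>" for y
    using asf_Z_pos[OF assms(1,2), of \<eta> y] asf_Z_less_top[of K y] by auto
  have G: "?G \<noteq> 0" "?G \<noteq> \<infinity>"
    using \<eta>_pos by auto
  have "(\<integral>\<^sup>+y. D y * (?E x y / asf_Z \<eta> K y) \<partial>lborel) \<le> c * indicator K x" for x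
  proof -
    have "(\<integral>\<^sup>+y. D y * (?E x y / asf_Z \<eta> K y) \<partial>lborel) \<le> (\<integral>\<^sup>+y. c / ?G * ?E x y \<partial>lborel)"
    proof (intro nn_integral_mono)
      fix y
      have "D y * (?E x y / asf_Z \<eta> K y) \<le> c / ?G * asf_Z \<eta> K y * (?E x y / asf_Z \<eta> K y)"
        using D_le by (rule mult_right_mono) simp
      also have "\<dots> = c / ?G * ?E x y"
        using Z_ne by (rule ennreal_mult_cancel_divide)
      finally show "D y * (?E x y / asf_Z \<eta> K y) \<le> c / ?G * ?E x y" .
    qed
    also have "\<dots> = c / ?G * (\<integral>\<^sup>+y. ?E x y \<partial>lborel)"
      by (rule nn_integral_cmult) measurable
    also have "(\<integral>\<^sup>+y. ?E x y \<partial>lborel) = indicator K x * ?G"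
      using nn_integral_gaussian_euclidean[OF \<eta>_pos, of x]
      by (cases "x \<in> K") (simp_all add: norm_minus_commute)
    also have "c / ?G * (indicator K x * ?G) = c * indicator K x"
      using G by (rule ennreal_divide_mult_cancel)
    finally show ?thesis .
  qed
  then show ?thesis
    unfolding has_density_le_def \<nu> asf_backward_density[OF \<open>D \<in> borel_measurable borel\<close> assms(1)]
    by (intro bexI[of _ "\<lambda>x. \<integral>\<^sup>+y. D y * (?E x y / asf_Z \<eta> K y) \<partial>lborel"]) auto
qed

lemma has_density_le_asf_x_law:
  fixes K :: "'a::euclidean_space set"
  assumes "K \<in> sets borel" and "emeasure lborel K \<noteq> 0" and "has_density_le (\<lambda>x. c * indicator K x) \<mu>0"
  shows "has_density_le (\<lambda>x. c * indicator K x) (asf_x_law \<eta> K \<mu>0 k)"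
proof (induction k)
  case 0
  then show ?case using assms(3) by (simp add: asf_x_law_def)
next
  case (Suc k)
  then show ?case
    using has_density_le_asf_backward[OF assms(1,2) has_density_le_asf_forward[OF assms(1)]]
    by (simp add: asf_x_law_def)
qed

lemma n_trials_eq:
  fixes K :: "'a::euclidean_space set"
  shows "n_trials \<eta> K y = ennreal (exp (- (norm (closest_point K y - y))\<^sup>2 / (2 * \<eta>)))
    * ennreal (sqrt (2 * pi * \<eta>) ^ DIM('a)) / asf_Z \<eta> K y"
proof -
  let ?p = "closest_point K y"
  have "exp (- P1 \<eta> K y x) = exp (- (norm (?p - y))\<^sup>2 / (2 * \<eta>)) * exp (- (norm (x - ?p))\<^sup>2 / (2 * \<eta>))" for x
    by (simp add: P1_def field_simps flip: exp_add)
  then have "(\<integral>\<^sup>+x. ennreal (exp (- P1 \<eta> K y x)) \<partial>lborel)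
      = ennreal (exp (- (norm (?p - y))\<^sup>2 / (2 * \<eta>))) * (\<integral>\<^sup>+x. ennreal (exp (- (norm (x - ?p))\<^sup>2 / (2 * \<eta>))) \<partial>lborel)"
    by (simp add: ennreal_mult nn_integral_cmult)
  then show ?thesis
    unfolding n_trials_def using nn_integral_gaussian_euclidean[OF \<eta>_pos, of ?p] by simp
qed

lemma nn_integral_n_trials_le:
  fixes K :: "'a::euclidean_space set"
  assumes "closed K" and "convex K" and "K \<noteq> {}" and "emeasure lborel K \<noteq> 0"
    and "has_density_le (\<lambda>y. c / ennreal (sqrt (2 * pi * \<eta>) ^ DIM('a)) * asf_Z \<eta> K y) \<nu>"
  shows "(\<integral>\<^sup>+y. n_trials \<eta> K y \<partial>\<nu>)
    \<le> c * (\<integral>\<^sup>+y. ennreal (exp (- (norm (closest_point K y - y))\<^sup>2 / (2 * \<eta>))) \<partial>lborel)"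
proof -
  let ?G = "ennreal (sqrt (2 * pi * \<eta>) ^ DIM('a))"
  let ?E = "\<lambda>y. ennreal (exp (- (norm (closest_point K y - y))\<^sup>2 / (2 * \<eta>)))"
  have [measurable]: "K \<in> sets borel" "closest_point K \<in> borel_measurable borel"
    using assms by (auto intro!: borel_measurable_continuous_onI continuous_on_closest_point)
  have [measurable]: "n_trials \<eta> K \<in> borel_measurable borel"
    unfolding n_trials_eq[abs_def] by measurable
  have Z_ne: "asf_Z \<eta> K y \<noteq> 0" "asf_Z \<eta> K y \<noteq> \<infinity>" for y
    using asf_Z_pos[OF \<open>K \<in> sets borel\<close> assms(4), of \<eta> y] asf_Z_less_top[of K y] by auto
  have "(\<integral>\<^sup>+y. n_trials \<eta> K y \<partial>\<nu>) \<le> (\<integral>\<^sup>+y. c / ?G * asf_Z \<eta> K y * n_trials \<eta> K y \<partial>lborel)"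
    using assms(5) by (rule nn_integral_le_if_has_density_le) measurable
  also have "\<dots> = (\<integral>\<^sup>+y. c / ?G * (?E y * ?G) \<partial>lborel)"
    unfolding n_trials_eq
    using Z_ne by (intro nn_integral_cong ennreal_mult_cancel_divide)
  also have "\<dots> = (\<integral>\<^sup>+y. c * ?E y \<partial>lborel)"
    using \<eta>_pos by (intro nn_integral_cong ennreal_divide_mult_cancel) auto
  also have "\<dots> = c * (\<integral>\<^sup>+y. ?E y \<partial>lborel)"
    by (rule nn_integral_cmult) measurable
  finally show ?thesis .
qed

end

theorem mainTheorem7:
  fixes K :: "'a::euclidean_space set" and R M :: real and \<mu>0 :: "'a measure" and k :: nat
  assumes "K \<noteq> {}" and "closed K" and "convex K"
    and "R > 1" and "ball 0 1 \<subseteq> K" and "K \<subseteq> cball 0 R"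
    and "prob_space \<mu>0" and "sets \<mu>0 = sets borel"
    and "warm M \<mu>0 (uniform_measure lborel K)"
  shows "(\<integral>\<^sup>+ y. n_trials (1 / (real DIM('a))^2) K y
            \<partial>(asf_y_law (1 / (real DIM('a))^2) K \<mu>0 k))
         \<le> ennreal (M * (sqrt (2 * pi * exp 1) + 1))"
proof -
  define \<eta> where "\<eta> = 1 / (real DIM('a))^2"
  define c where "c = ennreal M / emeasure lborel K"
  have "\<eta> > 0" and [measurable]: "K \<in> sets borel"
    using \<open>closed K\<close> by (auto simp: \<eta>_def)
  have "emeasure lborel (ball (0::'a) 1) > 0"
    by (simp add: emeasure_ball)
  then have "emeasure lborel K \<noteq> 0"
    using emeasure_mono[OF \<open>ball 0 1 \<subseteq> K\<close>, of lborel] by auto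
  moreover have "emeasure lborel K \<noteq> \<infinity>"
    using emeasure_bounded_finite[OF bounded_subset[OF bounded_cball \<open>K \<subseteq> cball 0 R\<close>]] by simp
  ultimately have "has_density_le (\<lambda>x. c * indicator K x) \<mu>0"
    unfolding c_def by (rule warm_imp_has_density_le[OF \<open>K \<in> sets borel\<close> _ _ assms(8,9)])
  then have "has_density_le (\<lambda>x. c * indicator K x) (asf_x_law \<eta> K \<mu>0 k)"
    by (rule has_density_le_asf_x_law[OF \<open>\<eta> > 0\<close> \<open>K \<in> sets borel\<close> \<open>emeasure lborel K \<noteq> 0\<close>])
  then have "has_density_le (\<lambda>y. c / ennreal (sqrt (2 * pi * \<eta>) ^ DIM('a)) * asf_Z \<eta> K y) (asf_y_law \<eta> K \<mu>0 k)"
    unfolding asf_y_law_def by (rule has_density_le_asf_forward[OF \<open>\<eta> > 0\<close> \<open>K \<in> sets borel\<close>])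
  then have "(\<integral>\<^sup>+y. n_trials \<eta> K y \<partial>asf_y_law \<eta> K \<mu>0 k)
      \<le> c * (\<integral>\<^sup>+y. ennreal (exp (- (real DIM('a) * norm (closest_point K y - y))\<^sup>2 / 2)) \<partial>lborel)"
    using nn_integral_n_trials_le[OF \<open>\<eta> > 0\<close> assms(2,3,1) \<open>emeasure lborel K \<noteq> 0\<close>]
    by (simp add: \<eta>_def power_mult_distrib field_simps)
  also have "\<dots> \<le> c * (emeasure lborel K * ennreal (1 + sqrt (2 * pi * exp 1)))"
    by (intro mult_left_mono nn_integral_exp_neg_square_dist_le assms(2,3,5)) simp_all
  also have "\<dots> = ennreal M * ennreal (1 + sqrt (2 * pi * exp 1))"
    using \<open>emeasure lborel K \<noteq> 0\<close> \<open>emeasure lborel K \<noteq> \<infinity>\<close>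
    by (simp add: c_def ennreal_divide_times mult.assoc[symmetric] top.not_eq_extremum)
  also have "\<dots> \<le> ennreal (M * (sqrt (2 * pi * exp 1) + 1))"
    by (cases "M \<ge> 0") (simp_all add: ennreal_mult add.commute ennreal_neg)
  finally show ?thesis
    unfolding \<eta>_def .
qed

end
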